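(* Let $\mathcal{A}=\langle Q,\{a,b\}\rangle$ be a synchronizing complete deterministic finite automaton with $|Q|=n$ states and two input letters $a,b$, and suppose that the letter $a$ is a simple idempotent. Then $\mathcal{A}$ has a reset word of length at most $(n-1)^2$, i.e., $\operatorname{rt}(\mathcal{A})\le (n-1)^2$.
   Context: A complete deterministic finite automaton (DFA) $\langle Q,\Sigma\rangle$ consists of a finite non-empty state set $Q$, a finite non-empty input alphabet $\Sigma$, and a transition function $Q\times\Sigma\to Q$, $(q,c)\mapsto q\cdot c$, extended to words by $q\cdot\varepsilon=q$ and $q\cdot(wc)=(q\cdot w)\cdot c$. For $P\subseteq Q$ and a word $w$, $P\cdot w=\{p\cdot w\mid p\in P\}$. A word $w\in\Sigma^*$ is a reset word if $|Q\cdot w|=1$; the DFA is synchronizing if it has a reset word, and its reset threshold $\operatorname{rt}(\mathcal{A})$ is the minimum length of a reset word. A letter $a$ is a simple idempotent if $|Q\setminus Q\cdot a|=1$ and $q\cdot a=q\cdot a^2$ for all $q\in Q$. *)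

theory Defs
  imports Main
begin

definition is_dfa :: "'q set \<Rightarrow> 'c set \<Rightarrow> ('q \<Rightarrow> 'c \<Rightarrow> 'q) \<Rightarrow> bool" where
  "is_dfa Q S delta \<longleftrightarrow> finite Q \<and> Q \<noteq> {} \<and> finite S \<and> S \<noteq> {} \<and>
     (\<forall>q\<in>Q. \<forall>c\<in>S. delta q c \<in> Q)"

definition delta_word :: "('q \<Rightarrow> 'c \<Rightarrow> 'q) \<Rightarrow> 'q \<Rightarrow> 'c list \<Rightarrow> 'q" where
  "delta_word delta q w = foldl delta q w"

definition reset_word :: "'q set \<Rightarrow> 'c set \<Rightarrow> ('q \<Rightarrow> 'c \<Rightarrow> 'q) \<Rightarrow> 'c list \<Rightarrow> bool" where
  "reset_word Q S delta w \<longleftrightarrow> set w \<subseteq> S \<and> card ((\<lambda>q. delta_word delta q w) ` Q) = 1"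

definition synchronizing :: "'q set \<Rightarrow> 'c set \<Rightarrow> ('q \<Rightarrow> 'c \<Rightarrow> 'q) \<Rightarrow> bool" where
  "synchronizing Q S delta \<longleftrightarrow> (\<exists>w. reset_word Q S delta w)"

definition reset_threshold :: "'q set \<Rightarrow> 'c set \<Rightarrow> ('q \<Rightarrow> 'c \<Rightarrow> 'q) \<Rightarrow> nat" where
  "reset_threshold Q S delta = (LEAST n. \<exists>w. reset_word Q S delta w \<and> length w = n)"

definition simple_idempotent :: "'q set \<Rightarrow> ('q \<Rightarrow> 'c \<Rightarrow> 'q) \<Rightarrow> 'c \<Rightarrow> bool" where
  "simple_idempotent Q delta a \<longleftrightarrow> card (Q - (\<lambda>q. delta q a) ` Q) = 1 \<and>
     (\<forall>q\<in>Q. delta q a = delta (delta q a) a)"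

end

theory Submission
  imports Defs
begin

text \<open>
  Write \<open>A\<close>, \<open>B\<close> for the actions of \<open>a\<close>, \<open>b\<close>; \<open>A\<close> fixes every state but one, and we induct on
  \<open>n\<close>. If distinct states \<open>x\<close>, \<open>y\<close> satisfy \<open>B x = B y\<close> and \<open>A x\<close>, \<open>A y\<close> coincide once \<open>y\<close> is
  identified with \<open>x\<close>, the quotient automaton on \<open>Q - {y}\<close> is of the same kind, and each of its reset
  words followed by \<open>b\<close> resets the original one; likewise, with \<open>b\<close> in front, after deleting a state
  that \<open>B\<close> misses and \<open>A\<close> does not enter. As \<open>(n - 2)\<^sup>2 + 1 \<le> (n - 1)\<^sup>2\<close>, only irreducible
  automata remain: either \<open>B\<close> is a permutation, or \<open>B\<close> identifies the moved state \<open>p\<close> with one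
  other state \<open>y\<close> and misses \<open>q = A p\<close>.

  In both cases a permutation \<open>s\<close> of \<open>X = Q\<close>, resp. \<open>X = Q - {q}\<close>, and the map redirecting \<open>p\<close>
  to \<open>y\<close> (with \<open>y = q\<close> in the first case) generate the action of all words on \<open>X\<close>; in the second
  case the blocks \<open>ab\<close> and \<open>b\<close> act as \<open>s = B \<circ> A\<close> and as \<open>s\<close> after the redirection. Call \<open>S\<close>
  dominated if \<open>s\<^sup>j y \<in> S\<close> implies \<open>s\<^sup>j p \<in> S\<close> for all \<open>j\<close>. Both generators pull dominated sets
  back to dominated sets that are no larger, so a proper subset \<open>S\<close> of \<open>X\<close> into which some word
  maps all of \<open>X\<close> is separated by an iterate: \<open>s\<^sup>j y \<in> S\<close> but \<open>s\<^sup>j p \<notin> S\<close>. From the first such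
  \<open>j\<close> within a period of \<open>p\<close> one builds a word of length at most \<open>n\<close> whose preimage of \<open>S\<close> has
  one more element. Growing a two-element set, resp. a singleton of \<open>X\<close> reached after one \<open>b\<close>, to
  \<open>X\<close> in this way costs at most \<open>n (n - 2)\<close> letters, and one more letter finishes.
\<close>

section \<open>Two-letter automata\<close>

definition run :: "('q \<Rightarrow> 'q) \<Rightarrow> ('q \<Rightarrow> 'q) \<Rightarrow> bool list \<Rightarrow> 'q \<Rightarrow> 'q" where
  "run A B w x = foldl (\<lambda>x c. if c then A x else B x) x w"

lemma run_Nil [simp]: "run A B [] x = x"
  by (simp add: run_def)

lemma run_Cons [simp]: "run A B (c # w) x = run A B w (if c then A x else B x)"
  by (simp add: run_def)

lemma run_append [simp]: "run A B (u @ v) x = run A B v (run A B u x)"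
  by (simp add: run_def)

lemma run_in: "A ` Q \<subseteq> Q \<Longrightarrow> B ` Q \<subseteq> Q \<Longrightarrow> x \<in> Q \<Longrightarrow> run A B w x \<in> Q"
  by (induction w arbitrary: x) auto

lemma run_fixpoint: "A z = z \<Longrightarrow> B z = z \<Longrightarrow> run A B w z = z"
  by (induction w) auto

lemma run_replicate_False: "run A B (replicate k False) x = (B ^^ k) x"
  by (induction k arbitrary: x) (simp_all add: funpow_swap1)

definition is_reset :: "'q set \<Rightarrow> ('q \<Rightarrow> 'q) \<Rightarrow> ('q \<Rightarrow> 'q) \<Rightarrow> bool list \<Rightarrow> bool" where
  "is_reset Q A B w \<longleftrightarrow> (\<exists>z. run A B w ` Q = {z})"

definition synchronizable :: "'q set \<Rightarrow> ('q \<Rightarrow> 'q) \<Rightarrow> ('q \<Rightarrow> 'q) \<Rightarrow> bool" where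
  "synchronizable Q A B \<longleftrightarrow> (\<exists>w. is_reset Q A B w)"

lemma is_reset_iff_card: "is_reset Q A B w \<longleftrightarrow> card (run A B w ` Q) = 1"
  by (simp add: is_reset_def card_1_singleton_iff)

lemma is_resetI: "Q \<noteq> {} \<Longrightarrow> (\<And>x. x \<in> Q \<Longrightarrow> run A B w x = z) \<Longrightarrow> is_reset Q A B w"
  unfolding is_reset_def by (intro exI[of _ z]) auto

lemma is_reset_subset:
  assumes "is_reset Q A B w" "C \<subseteq> Q" "C \<noteq> {}"
  shows "is_reset C A B w"
proof -
  obtain z where "run A B w ` Q = {z}"
    using assms(1) unfolding is_reset_def by blast
  moreover have "run A B w ` C \<subseteq> run A B w ` Q" "run A B w ` C \<noteq> {}"
    using assms(2,3) by auto
  ultimately have "run A B w ` C = {z}"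
    by (simp add: subset_singleton_iff)
  then show ?thesis unfolding is_reset_def ..
qed

lemma reset_state_in_closed_subset:
  assumes "run A B w ` Q = {z}" "C \<subseteq> Q" "C \<noteq> {}" "A ` C \<subseteq> C" "B ` C \<subseteq> C"
  shows "z \<in> C"
proof -
  obtain x where "x \<in> C" using assms(3) by blast
  then have "run A B w x \<in> C" "run A B w x = z"
    using assms run_in[of A C B] by blast+
  then show ?thesis by simp
qed

lemma reset_state_eq_sink:
  assumes "run A B w ` Q = {z}" "z' \<in> Q" "A z' = z'" "B z' = z'"
  shows "z' = z"
  using assms run_fixpoint[of A z' B w] by (metis image_eqI singletonD)

lemma inj_on_run:
  assumes "A ` C \<subseteq> C" "B ` C \<subseteq> C" "inj_on A C" "inj_on B C"
  shows "inj_on (run A B w) C"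
proof (induction w)
  case (Cons c w)
  let ?f = "if c then A else B"
  have "?f ` C \<subseteq> C" "inj_on ?f C" using assms by auto
  with Cons.IH have "inj_on (run A B w \<circ> ?f) C"
    by (intro comp_inj_on) (auto intro: inj_on_subset)
  then show ?case by (cases c) (simp_all add: comp_def)
qed (simp add: inj_on_def)

lemma synchronizable_invariant_inj_card_le_1:
  assumes "synchronizable Q A B" "finite Q" "C \<subseteq> Q" "A ` C \<subseteq> C" "B ` C \<subseteq> C"
    "inj_on A C" "inj_on B C"
  shows "card C \<le> 1"
proof -
  obtain w z where w: "run A B w ` Q = {z}"
    using assms(1) unfolding synchronizable_def is_reset_def by blast
  have "card C = card (run A B w ` C)"
    using inj_on_run[OF assms(4-7)] by (simp add: card_image)
  also have "\<dots> \<le> card (run A B w ` Q)"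
    using assms(2,3) by (intro card_mono) auto
  finally show ?thesis using w by simp
qed

lemma run_semiconj:
  assumes "A ` Q \<subseteq> Q" "B ` Q \<subseteq> Q"
    and "\<And>z. z \<in> Q \<Longrightarrow> f (A z) = A' (f z)" "\<And>z. z \<in> Q \<Longrightarrow> f (B z) = B' (f z)"
  shows "z \<in> Q \<Longrightarrow> f (run A B w z) = run A' B' w (f z)"
  using assms by (induction w arbitrary: z) auto

lemma extension_chain:
  assumes "finite X"
    and step: "\<And>S. E S \<Longrightarrow> S \<subseteq> X \<Longrightarrow> S \<noteq> X \<Longrightarrow>
      \<exists>u. length u \<le> c \<and> card S < card {x\<in>X. run A B u x \<in> S} \<and> E {x\<in>X. run A B u x \<in> S}"
  shows "E S \<Longrightarrow> S \<subseteq> X \<Longrightarrow> \<exists>w. (\<forall>x\<in>X. run A B w x \<in> S) \<and> length w \<le> c * (card X - card S)"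
proof (induction "card X - card S" arbitrary: S rule: less_induct)
  case less
  show ?case
  proof (cases "S = X")
    case False
    then obtain u where u: "length u \<le> c" "card S < card {x\<in>X. run A B u x \<in> S}"
      "E {x\<in>X. run A B u x \<in> S}"
      using step less.prems by blast
    define S' where "S' = {x\<in>X. run A B u x \<in> S}"
    have "card S' \<le> card X"
      unfolding S'_def using \<open>finite X\<close> by (intro card_mono) auto
    then have smaller: "card X - card S' < card X - card S"
      using u(2) unfolding S'_def by linarith
    then obtain w where w: "\<forall>x\<in>X. run A B w x \<in> S'" "length w \<le> c * (card X - card S')"
      using less.hyps u(3) unfolding S'_def by blast
    have "length (w @ u) \<le> c * (card X - card S') + c"
      using w(2) u(1) by simp
    also have "\<dots> = c * (card X - card S' + 1)"
      by simp
    also have "\<dots> \<le> c * (card X - card S)"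
      using smaller by (intro mult_le_mono2) linarith
    finally show ?thesis
      using w(1) unfolding S'_def by (intro exI[of _ "w @ u"]) auto
  qed auto
qed

section \<open>A permutation with one redirected point\<close>

lemma sum_periodic_window:
  fixes h :: "nat \<Rightarrow> 'a::ab_group_add"
  assumes periodic: "\<And>i. h (i + P) = h i"
  shows "(\<Sum>i = r..<r + P. h i) = (\<Sum>i<P. h i)"
proof (induction r)
  case 0
  then show ?case
    by (simp add: atLeast0LessThan)
next
  case (Suc r)
  have "h r + (\<Sum>i = Suc r..<Suc (r + P). h i) = (\<Sum>i = r..<Suc (r + P). h i)"
    by (simp add: sum.atLeast_Suc_lessThan)
  also have "\<dots> = (\<Sum>i = r..<r + P. h i) + h r"
    using periodic[of r] by simp
  finally show ?case
    using Suc by (simp add: add.commute)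
qed

locale orbit_pair =
  fixes X :: "'q set" and s :: "'q \<Rightarrow> 'q" and p y :: 'q
  assumes finite_X: "finite X" and bij_s: "bij_betw s X X"
    and p_in_X: "p \<in> X" and y_in_X: "y \<in> X" and p_ne_y: "p \<noteq> y"
    and orbit_of_y: "(\<exists>i. (s ^^ i) y = p) \<or> s y = y"
begin

lemma funpow_in_X: "x \<in> X \<Longrightarrow> (s ^^ k) x \<in> X"
  using bij_betw_funpow[OF bij_s, of k] bij_betwE by blast

lemma s_in_X: "x \<in> X \<Longrightarrow> s x \<in> X"
  using funpow_in_X[of x 1] by simp

lemma inj_on_funpow: "inj_on (s ^^ k) X"
  using bij_betw_funpow[OF bij_s] bij_betw_imp_inj_on by blast

lemma funpow_commute: "(s ^^ i) ((s ^^ j) x) = (s ^^ j) ((s ^^ i) x)"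
proof -
  have "(s ^^ i) ((s ^^ j) x) = (s ^^ (i + j)) x"
    by (simp add: funpow_add)
  also have "\<dots> = (s ^^ (j + i)) x"
    by (simp only: add.commute)
  also have "\<dots> = (s ^^ j) ((s ^^ i) x)"
    by (simp add: funpow_add)
  finally show ?thesis .
qed

lemma stabilizer: "(s ^^ j) p = p \<Longrightarrow> (s ^^ j) y = y"
  using orbit_of_y
proof
  assume "\<exists>i. (s ^^ i) y = p" and p_fixed: "(s ^^ j) p = p"
  then obtain i where i: "(s ^^ i) y = p" by blast
  then have "(s ^^ i) ((s ^^ j) y) = (s ^^ i) y"
    using p_fixed by (simp add: funpow_commute[of i j y])
  then show "(s ^^ j) y = y"
    using inj_onD[OF inj_on_funpow] funpow_in_X y_in_X by blast
next
  assume "s y = y"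
  then show "(s ^^ j) y = y"
    by (induction j) auto
qed

lemma period:
  obtains P where "0 < P" "P \<le> card X" "(s ^^ P) p = p" "(s ^^ P) y = y"
proof -
  let ?f = "\<lambda>i. (s ^^ i) p"
  have "?f ` {0..card X} \<subseteq> X"
    using funpow_in_X p_in_X by blast
  then have "card (?f ` {0..card X}) \<le> card X"
    by (rule card_mono[OF finite_X])
  then have "\<not> inj_on ?f {0..card X}"
    using card_image by fastforce
  then obtain i k where ik: "i \<le> card X" "k \<le> card X" "i \<noteq> k" "?f i = ?f k"
    unfolding inj_on_def by auto
  have "\<exists>i k. i < k \<and> k \<le> card X \<and> ?f i = ?f k"
  proof (cases "i < k")
    case True
    then show ?thesis using ik by blast
  next
    case False
    then show ?thesis using ik by (intro exI[of _ k] exI[of _ i]) auto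
  qed
  then obtain i k where ik: "i < k" "k \<le> card X" "(s ^^ i) p = (s ^^ k) p"
    by blast
  have "(s ^^ i) ((s ^^ (k - i)) p) = (s ^^ (i + (k - i))) p"
    by (simp add: funpow_add)
  also have "\<dots> = (s ^^ i) p"
    using ik by simp
  finally have "(s ^^ (k - i)) p = p"
    using inj_onD[OF inj_on_funpow] funpow_in_X p_in_X by blast
  moreover have "0 < k - i" "k - i \<le> card X"
    using ik by auto
  ultimately show ?thesis
    using that stabilizer by blast
qed

lemma card_preimage_funpow:
  assumes "S \<subseteq> X"
  shows "card {x\<in>X. (s ^^ k) x \<in> S} = card S"
proof -
  let ?V = "{x\<in>X. (s ^^ k) x \<in> S}"
  have "S \<subseteq> (s ^^ k) ` X"
    using bij_betw_imp_surj_on[OF bij_betw_funpow[OF bij_s, of k]] assms by simp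
  then have "(s ^^ k) ` ?V = S"
    by fastforce
  moreover have "inj_on (s ^^ k) ?V"
    using inj_on_funpow by (rule inj_on_subset) simp
  ultimately show ?thesis
    using card_image by fastforce
qed

lemma card_preimage_funpow_redirect:
  assumes "S \<subseteq> X" "(s ^^ k) y \<in> S" "(s ^^ k) p \<notin> S"
  shows "card {x\<in>X. (s ^^ k) ((id(p := y)) x) \<in> S} = card S + 1"
proof -
  have "{x\<in>X. (s ^^ k) ((id(p := y)) x) \<in> S} = insert p {x\<in>X. (s ^^ k) x \<in> S}"
    using assms(2) p_in_X by (auto split: if_splits)
  moreover have "p \<notin> {x\<in>X. (s ^^ k) x \<in> S}"
    using assms(3) by simp
  ultimately show ?thesis
    using card_preimage_funpow[OF assms(1)] finite_X by simp
qed

text \<open>The point of these notions: no composition of contracting maps sends \<open>X\<close> into a proper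
  dominated subset, so such a subset cannot be reached from all of \<open>X\<close>.\<close>

definition dominated :: "'q set \<Rightarrow> bool" where
  "dominated T \<longleftrightarrow> T \<subseteq> X \<and> (\<forall>j. (s ^^ j) y \<in> T \<longrightarrow> (s ^^ j) p \<in> T)"

definition contracting :: "('q \<Rightarrow> 'q) \<Rightarrow> bool" where
  "contracting f \<longleftrightarrow> (\<forall>x\<in>X. f x \<in> X) \<and>
     (\<forall>T. dominated T \<longrightarrow> dominated {x\<in>X. f x \<in> T} \<and> card {x\<in>X. f x \<in> T} \<le> card T)"

lemma contractingI:
  assumes "\<And>x. x \<in> X \<Longrightarrow> f x \<in> X"
    and "\<And>T. dominated T \<Longrightarrow> dominated {x\<in>X. f x \<in> T}"
    and "\<And>T. dominated T \<Longrightarrow> card {x\<in>X. f x \<in> T} \<le> card T"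
  shows "contracting f"
  using assms unfolding contracting_def by blast

lemma contracting_id: "contracting (\<lambda>x. x)"
proof (rule contractingI)
  fix T assume "dominated T"
  then have "{x\<in>X. x \<in> T} = T"
    unfolding dominated_def by blast
  with \<open>dominated T\<close> show "dominated {x\<in>X. x \<in> T}" "card {x\<in>X. x \<in> T} \<le> card T"
    by simp_all
qed

lemma contracting_comp:
  assumes f: "contracting f" and g: "contracting g"
  shows "contracting (g \<circ> f)"
proof (rule contractingI)
  fix T assume "dominated T"
  then have "dominated {x\<in>X. g x \<in> T}" and card_g: "card {x\<in>X. g x \<in> T} \<le> card T"
    using g unfolding contracting_def by blast+
  then have "dominated {x\<in>X. f x \<in> {x\<in>X. g x \<in> T}}"
    and card_f: "card {x\<in>X. f x \<in> {x\<in>X. g x \<in> T}} \<le> card {x\<in>X. g x \<in> T}"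
    using f unfolding contracting_def by blast+
  moreover have "{x\<in>X. (g \<circ> f) x \<in> T} = {x\<in>X. f x \<in> {x\<in>X. g x \<in> T}}"
    using f unfolding contracting_def by auto
  ultimately show "dominated {x\<in>X. (g \<circ> f) x \<in> T}" "card {x\<in>X. (g \<circ> f) x \<in> T} \<le> card T"
    using card_g by simp_all
qed (use f g in \<open>simp add: contracting_def\<close>)

lemma contracting_cong:
  assumes "contracting f" "\<And>x. x \<in> X \<Longrightarrow> g x = f x"
  shows "contracting g"
proof -
  have "{x\<in>X. g x \<in> T} = {x\<in>X. f x \<in> T}" for T
    using assms(2) by auto
  then show ?thesis
    using assms unfolding contracting_def by simp
qed

lemma contracting_s: "contracting s"
proof (rule contractingI)
  fix T assume T: "dominated T"
  show "dominated {x\<in>X. s x \<in> T}"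
    unfolding dominated_def
  proof (intro conjI allI impI)
    fix j assume "(s ^^ j) y \<in> {x\<in>X. s x \<in> T}"
    then have "(s ^^ Suc j) y \<in> T"
      by simp
    then have "(s ^^ Suc j) p \<in> T"
      using T unfolding dominated_def by blast
    then show "(s ^^ j) p \<in> {x\<in>X. s x \<in> T}"
      using funpow_in_X[OF p_in_X] by simp
  qed blast
  have "card {x\<in>X. s x \<in> T} = card (s ` {x\<in>X. s x \<in> T})"
    using inj_on_funpow[of 1] by (simp add: card_image inj_on_subset)
  also have "\<dots> \<le> card T"
    using T finite_X unfolding dominated_def by (intro card_mono) (auto intro: finite_subset)
  finally show "card {x\<in>X. s x \<in> T} \<le> card T" .
qed (rule s_in_X)

lemma contracting_redirect: "contracting (id(p := y))"
proof (rule contractingI)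
  fix T assume T: "dominated T"
  then have T_X: "T \<subseteq> X" and y_T: "y \<in> T \<Longrightarrow> p \<in> T"
    unfolding dominated_def by (metis funpow_0)+
  show "dominated {x\<in>X. (id(p := y)) x \<in> T}"
    unfolding dominated_def
  proof (intro conjI allI impI)
    fix j
    let ?u = "(s ^^ j) y" and ?v = "(s ^^ j) p"
    assume u: "?u \<in> {x\<in>X. (id(p := y)) x \<in> T}"
    show "?v \<in> {x\<in>X. (id(p := y)) x \<in> T}"
    proof (cases "?v = p")
      case True
      then have "?u = y"
        using stabilizer by simp
      with u True p_in_X p_ne_y show ?thesis
        by simp
    next
      case False
      have "?u \<in> T"
        using u y_T by (cases "?u = p") auto
      then have "?v \<in> T"
        using T unfolding dominated_def by blast
      with False funpow_in_X[OF p_in_X] show ?thesis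
        by simp
    qed
  qed blast
  have "{x\<in>X. (id(p := y)) x \<in> T} \<subseteq> T"
    using y_T by auto
  then show "card {x\<in>X. (id(p := y)) x \<in> T} \<le> card T"
    using T_X finite_X by (intro card_mono) (auto intro: finite_subset)
qed (use p_in_X y_in_X in auto)

lemma contracting_run: "contracting f \<Longrightarrow> contracting g \<Longrightarrow> contracting (run f g w)"
proof (induction w)
  case Nil
  then show ?case
    using contracting_id by simp
next
  case (Cons c w)
  then have "contracting (run f g w \<circ> (if c then f else g))"
    by (intro contracting_comp) auto
  then show ?case
    by (rule contracting_cong) simp
qed

lemma separating_iterate:
  assumes "contracting f" "S \<subseteq> X" "S \<noteq> X" "\<And>x. x \<in> X \<Longrightarrow> f x \<in> S"
  shows "\<exists>j. (s ^^ j) y \<in> S \<and> (s ^^ j) p \<notin> S"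
proof (rule ccontr)
  assume "\<not> ?thesis"
  then have "dominated S"
    using assms(2) unfolding dominated_def by blast
  then have "card {x\<in>X. f x \<in> S} \<le> card S"
    using assms(1) unfolding contracting_def by blast
  moreover have "{x\<in>X. f x \<in> S} = X"
    using assms(4) by blast
  ultimately have "S = X"
    using assms(2) finite_X by (metis card_seteq)
  with assms(3) show False ..
qed

definition guarded_word :: "'q set \<Rightarrow> nat \<Rightarrow> bool list" where
  "guarded_word S k = map (\<lambda>i. (s ^^ i) p \<in> S \<and> (s ^^ i) y \<notin> S) (rev [1..<Suc k])"

lemma guarded_word_Suc:
  "guarded_word S (Suc k) = ((s ^^ Suc k) p \<in> S \<and> (s ^^ Suc k) y \<notin> S) # guarded_word S k"
  by (simp add: guarded_word_def)

lemma length_guarded_word: "length (guarded_word S k) = k"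
  by (simp add: guarded_word_def)

lemma count_guarded_word:
  "length (filter id (guarded_word S k)) = card {i\<in>{1..k}. (s ^^ i) p \<in> S \<and> (s ^^ i) y \<notin> S}"
proof -
  let ?bad = "\<lambda>i. (s ^^ i) p \<in> S \<and> (s ^^ i) y \<notin> S"
  have "length (filter id (guarded_word S k)) = length (filter ?bad [1..<Suc k])"
    by (simp add: guarded_word_def filter_map comp_def flip: rev_filter)
  also have "\<dots> = card ({i. ?bad i} \<inter> set [1..<Suc k])"
    by (rule distinct_length_filter) simp
  also have "{i. ?bad i} \<inter> set [1..<Suc k] = {i\<in>{1..k}. ?bad i}"
    by auto
  finally show ?thesis .
qed

text \<open>\<open>True\<close> acts as \<open>s\<close>, \<open>False\<close> as \<open>s\<close> after redirecting \<open>p\<close> to \<open>y\<close>; later they are the blocks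
  \<open>ab\<close> and \<open>b\<close>, of lengths 2 and 1. If no \<open>i \<le> k\<close> has \<open>s\<^sup>i y \<in> S\<close> and \<open>s\<^sup>i p \<notin> S\<close>, redirecting
  before step \<open>i\<close> changes membership in \<open>S\<close> only when \<open>s\<^sup>i p \<in> S\<close> and \<open>s\<^sup>i y \<notin> S\<close>, so the
  long block is needed only there.\<close>

lemma run_guarded_word:
  assumes "\<And>i. 0 < i \<Longrightarrow> i \<le> k \<Longrightarrow> (s ^^ i) y \<in> S \<Longrightarrow> (s ^^ i) p \<in> S" and "x \<in> X"
  shows "run s (s \<circ> id(p := y)) (guarded_word S k) x \<in> S \<longleftrightarrow> (s ^^ k) x \<in> S"
  using assms
proof (induction k arbitrary: x)
  case (Suc k)
  let ?bad = "(s ^^ Suc k) p \<in> S \<and> (s ^^ Suc k) y \<notin> S"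
  define x' where "x' = (if ?bad then s x else s ((id(p := y)) x))"
  have shift: "(s ^^ k) (s z) = (s ^^ Suc k) z" for z
    by (simp add: funpow_swap1)
  have "x' \<in> X"
    unfolding x'_def using Suc.prems(2) s_in_X y_in_X by simp
  moreover have "\<And>i. 0 < i \<Longrightarrow> i \<le> k \<Longrightarrow> (s ^^ i) y \<in> S \<Longrightarrow> (s ^^ i) p \<in> S"
    using Suc.prems(1) by simp
  ultimately have IH: "run s (s \<circ> id(p := y)) (guarded_word S k) x' \<in> S \<longleftrightarrow> (s ^^ k) x' \<in> S"
    using Suc.IH by blast
  have "run s (s \<circ> id(p := y)) (guarded_word S (Suc k)) x = run s (s \<circ> id(p := y)) (guarded_word S k) x'"
    unfolding x'_def guarded_word_Suc by simp
  also have "\<dots> \<in> S \<longleftrightarrow> (s ^^ Suc k) x \<in> S"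
  proof (cases "?bad \<or> x \<noteq> p")
    case True
    then have "(s ^^ k) x' = (s ^^ Suc k) x"
      unfolding x'_def using shift by auto
    then show ?thesis
      using IH by simp
  next
    case False
    then have "(s ^^ k) x' = (s ^^ Suc k) y" "x = p"
      unfolding x'_def using shift by auto
    moreover have "(s ^^ Suc k) y \<in> S \<Longrightarrow> (s ^^ Suc k) p \<in> S"
      using Suc.prems(1) by blast
    ultimately show ?thesis
      using IH False by auto
  qed
  finally show ?case .
qed (simp add: guarded_word_def)

lemma visits_per_period:
  assumes "(s ^^ i\<^sub>0) y = p" "(s ^^ P) p = p"
  shows "(\<Sum>i = 1..<1 + P. of_bool ((s ^^ i) p \<in> S) :: int) = (\<Sum>i = 1..<1 + P. of_bool ((s ^^ i) y \<in> S))"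
proof -
  define g :: "nat \<Rightarrow> int" where "g i = of_bool ((s ^^ i) y \<in> S)" for i
  have "of_bool ((s ^^ i) p \<in> S) = g (i + i\<^sub>0)" for i
    unfolding g_def by (simp add: funpow_add assms(1))
  moreover have periodic: "g (i + P) = g i" for i
    unfolding g_def using stabilizer[OF assms(2)] by (simp add: funpow_add)
  ultimately have "(\<Sum>i = 1..<1 + P. of_bool ((s ^^ i) p \<in> S)) = (\<Sum>i = 1 + i\<^sub>0..<1 + i\<^sub>0 + P. g i)"
    using sum.shift_bounds_nat_ivl[of g 1 i\<^sub>0 "1 + P"] by (simp add: ac_simps)
  also have "\<dots> = (\<Sum>i = 1..<1 + P. g i)"
    using sum_periodic_window[of g P "1 + i\<^sub>0", OF periodic]
      sum_periodic_window[of g P 1, OF periodic] by (simp only:)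
  finally show ?thesis
    unfolding g_def .
qed

text \<open>The indices below \<open>m\<close> where only the iterate of \<open>p\<close> lies in \<open>S\<close> are balanced, by
  \<open>visits_per_period\<close>, by indices in \<open>[m, P]\<close> where only the iterate of \<open>y\<close> does.\<close>

lemma card_bad_indices_le:
  assumes m: "0 < m" "m \<le> P" and period: "(s ^^ P) p = p"
    and good: "(s ^^ m) y \<in> S"
    and no_good: "\<And>i. 0 < i \<Longrightarrow> i < m \<Longrightarrow> (s ^^ i) y \<in> S \<Longrightarrow> (s ^^ i) p \<in> S"
  shows "m + card {i\<in>{1..<m}. (s ^^ i) p \<in> S \<and> (s ^^ i) y \<notin> S} \<le> P + 1"
  using orbit_of_y
proof
  assume "s y = y"
  then have "(s ^^ i) y = y" for i
    by (induction i) auto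
  then have "{i\<in>{1..<m}. (s ^^ i) p \<in> S \<and> (s ^^ i) y \<notin> S} = {}"
    using good by auto
  then have "card {i\<in>{1..<m}. (s ^^ i) p \<in> S \<and> (s ^^ i) y \<notin> S} = 0"
    by (simp only: card.empty)
  then show ?thesis
    using m by linarith
next
  assume "\<exists>i. (s ^^ i) y = p"
  then obtain i\<^sub>0 where "(s ^^ i\<^sub>0) y = p"
    by blast
  define D :: "nat \<Rightarrow> int" where "D i = of_bool ((s ^^ i) y \<in> S) - of_bool ((s ^^ i) p \<in> S)" for i
  have "(\<Sum>i = 1..<1 + P. D i) = 0"
    unfolding D_def using visits_per_period[OF \<open>(s ^^ i\<^sub>0) y = p\<close> period] by (simp add: sum_subtractf)
  moreover have "(\<Sum>i = 1..<1 + P. D i) = (\<Sum>i = 1..<m. D i) + (\<Sum>i = m..<1 + P. D i)"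
    by (rule sum.atLeastLessThan_concat[symmetric]) (use m in auto)
  moreover have "(\<Sum>i = 1..<m. D i) = (\<Sum>i = 1..<m. - of_bool ((s ^^ i) p \<in> S \<and> (s ^^ i) y \<notin> S))"
    using no_good unfolding D_def by (intro sum.cong) auto
  moreover have "\<dots> = - int (card ({1..<m} \<inter> {i. (s ^^ i) p \<in> S \<and> (s ^^ i) y \<notin> S}))"
    by (simp only: sum_negf sum_of_bool_eq finite_atLeastLessThan)
  moreover have "{1..<m} \<inter> {i. (s ^^ i) p \<in> S \<and> (s ^^ i) y \<notin> S} = {i\<in>{1..<m}. (s ^^ i) p \<in> S \<and> (s ^^ i) y \<notin> S}"
    by blast
  moreover have "(\<Sum>i = m..<1 + P. D i) \<le> of_nat (card {m..<1 + P}) * 1"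
    unfolding D_def by (intro sum_bounded_above) simp
  ultimately show ?thesis
    using m by simp
qed

lemma short_funpow_redirect_word:
  assumes "S \<subseteq> X" "(s ^^ j) y \<in> S" "(s ^^ j) p \<notin> S"
  shows "\<exists>k < card X. card {x\<in>X. (s ^^ k) ((id(p := y)) x) \<in> S} = card S + 1"
proof -
  obtain P where P: "0 < P" "P \<le> card X" "(s ^^ P) p = p" "(s ^^ P) y = y"
    by (rule period)
  then have "(s ^^ (j mod P)) y \<in> S" "(s ^^ (j mod P)) p \<notin> S"
    using assms(2,3) funpow_mod_eq[where f = s and n = P] by simp_all
  moreover have "j mod P < card X"
    using P(1,2) by (meson mod_less_divisor order_less_le_trans)
  ultimately show ?thesis
    using card_preimage_funpow_redirect[OF assms(1)] by blast
qed

lemma first_separating_iterate: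
  assumes "(s ^^ j) y \<in> S" "(s ^^ j) p \<notin> S" and P: "0 < P" "(s ^^ P) p = p"
  obtains m where "0 < m" "m \<le> P" "(s ^^ m) y \<in> S" "(s ^^ m) p \<notin> S"
    "\<And>i. 0 < i \<Longrightarrow> i < m \<Longrightarrow> (s ^^ i) y \<in> S \<Longrightarrow> (s ^^ i) p \<in> S"
proof -
  let ?sep = "\<lambda>i. 0 < i \<and> (s ^^ i) y \<in> S \<and> (s ^^ i) p \<notin> S"
  have "(s ^^ P) y = y"
    using stabilizer P(2) .
  then have jm: "(s ^^ (j mod P)) y \<in> S" "(s ^^ (j mod P)) p \<notin> S"
    using assms(1,2) P(2) funpow_mod_eq[where f = s and n = P] by simp_all
  obtain k where k: "?sep k" "k \<le> P"
  proof (cases "j mod P = 0")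
    case True
    then show ?thesis
      using that[of P] jm P \<open>(s ^^ P) y = y\<close> by simp
  next
    case False
    then show ?thesis
      using that[of "j mod P"] jm P(1) by simp
  qed
  then have "?sep (LEAST i. ?sep i)" "(LEAST i. ?sep i) \<le> P"
    using LeastI[of ?sep k] Least_le[of ?sep k] by simp_all
  moreover have "\<not> ?sep i" if "i < (LEAST i. ?sep i)" for i
    using that by (rule not_less_Least)
  ultimately show ?thesis
    using that by blast
qed

lemma short_block_word:
  assumes "S \<subseteq> X" "(s ^^ j) y \<in> S" "(s ^^ j) p \<notin> S"
  shows "\<exists>bl. card {x\<in>X. run s (s \<circ> id(p := y)) bl x \<in> S} = card S + 1
    \<and> length bl + length (filter id bl) \<le> card X + 1"
proof -
  obtain P where P: "0 < P" "P \<le> card X" "(s ^^ P) p = p"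
    by (rule period)
  obtain m where m: "0 < m" "m \<le> P" "(s ^^ m) y \<in> S" "(s ^^ m) p \<notin> S"
    and no_sep: "\<And>i. 0 < i \<Longrightarrow> i < m \<Longrightarrow> (s ^^ i) y \<in> S \<Longrightarrow> (s ^^ i) p \<in> S"
    using first_separating_iterate[OF assms(2,3) P(1,3)] by blast
  define bl where "bl = False # guarded_word S (m - 1)"
  have "run s (s \<circ> id(p := y)) bl x \<in> S \<longleftrightarrow> (s ^^ m) ((id(p := y)) x) \<in> S" if "x \<in> X" for x
  proof -
    have "(id(p := y)) x \<in> X"
      using that y_in_X by simp
    then have "run s (s \<circ> id(p := y)) bl x \<in> S \<longleftrightarrow> (s ^^ (m - 1)) (s ((id(p := y)) x)) \<in> S"
      unfolding bl_def using run_guarded_word[of "m - 1" S] no_sep s_in_X by simp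
    also have "(s ^^ (m - 1)) (s ((id(p := y)) x)) = (s ^^ m) ((id(p := y)) x)"
      using m(1) by (cases m) (simp_all add: funpow_swap1)
    finally show ?thesis .
  qed
  then have "{x\<in>X. run s (s \<circ> id(p := y)) bl x \<in> S} = {x\<in>X. (s ^^ m) ((id(p := y)) x) \<in> S}"
    by blast
  then have "card {x\<in>X. run s (s \<circ> id(p := y)) bl x \<in> S} = card S + 1"
    using card_preimage_funpow_redirect[OF assms(1) m(3,4)] by simp
  moreover have "{1..m - 1} = {1..<m}"
    using m(1) by auto
  then have "length bl + length (filter id bl) = m + card {i\<in>{1..<m}. (s ^^ i) p \<in> S \<and> (s ^^ i) y \<notin> S}"
    using m(1) by (simp add: bl_def length_guarded_word count_guarded_word)
  ultimately show ?thesis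
    using card_bad_indices_le[OF m(1,2) P(3) m(3) no_sep] P(2) by (intro exI[of _ bl]) simp
qed

end

section \<open>Automata whose letter \<open>a\<close> moves at most one state\<close>

lemma square_pred_eq:
  fixes n :: nat
  assumes "2 \<le> n"
  shows "n * (n - 2) + 1 = (n - 1)\<^sup>2"
proof -
  obtain k where "n = k + 2"
    using assms le_Suc_ex by (metis add.commute)
  then show ?thesis
    by (simp add: power2_eq_square algebra_simps)
qed

lemma square_pred_pred_le:
  fixes n :: nat
  assumes "2 \<le> n"
  shows "(n - 2)\<^sup>2 + 1 \<le> (n - 1)\<^sup>2"
proof -
  obtain k where "n = k + 2"
    using assms le_Suc_ex by (metis add.commute)
  then show ?thesis
    by (simp add: power2_eq_square)
qed

definition blocks :: "bool list \<Rightarrow> bool list" where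
  "blocks bl = concat (map (\<lambda>c. if c then [True, False] else [False]) bl)"

lemma blocks_simps [simp]:
  "blocks [] = []"
  "blocks (c # bl) = (if c then [True, False] else [False]) @ blocks bl"
  "blocks (bl @ [c]) = blocks bl @ (if c then [True, False] else [False])"
  by (simp_all add: blocks_def)

lemma length_blocks: "length (blocks bl) = length bl + length (filter id bl)"
  by (induction bl) auto

locale simple_idempotent_automaton =
  fixes Q :: "'q set" and A B :: "'q \<Rightarrow> 'q"
  assumes finite_Q: "finite Q"
    and A_closed: "A ` Q \<subseteq> Q" and B_closed: "B ` Q \<subseteq> Q"
    and A_moves_at_most_one: "\<And>x y. x \<in> Q \<Longrightarrow> y \<in> Q \<Longrightarrow> A x \<noteq> x \<Longrightarrow> A y \<noteq> y \<Longrightarrow> x = y"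
    and synchronizable: "synchronizable Q A B"
begin

lemma Q_nonempty: "Q \<noteq> {}"
  using synchronizable unfolding synchronizable_def is_reset_def by auto

lemma run_in_Q: "x \<in> Q \<Longrightarrow> run A B w x \<in> Q"
  using run_in[OF A_closed B_closed] .

lemma A_fixes: "p \<in> Q \<Longrightarrow> A p \<noteq> p \<Longrightarrow> x \<in> Q \<Longrightarrow> x \<noteq> p \<Longrightarrow> A x = x"
  using A_moves_at_most_one by blast

lemma A_idempotent: "x \<in> Q \<Longrightarrow> A (A x) = A x"
  using A_closed A_moves_at_most_one by (metis image_subset_iff)

lemma merge_semiconj:
  assumes "B x = B y" "(id(y := x)) (A x) = (id(y := x)) (A y)" "z \<in> Q"
  shows "(id(y := x)) (run A B w z) = run (id(y := x) \<circ> A) (id(y := x) \<circ> B) w ((id(y := x)) z)"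
proof (rule run_semiconj[OF A_closed B_closed _ _ assms(3)])
  show "(id(y := x)) (A z) = (id(y := x) \<circ> A) ((id(y := x)) z)"
    and "(id(y := x)) (B z) = (id(y := x) \<circ> B) ((id(y := x)) z)" for z
    using assms(1,2) by (cases "z = y"; simp)+
qed

lemma merge_reduct:
  assumes "x \<in> Q" "y \<in> Q" "x \<noteq> y" "B x = B y" "(id(y := x)) (A x) = (id(y := x)) (A y)"
  shows "simple_idempotent_automaton (Q - {y}) (id(y := x) \<circ> A) (id(y := x) \<circ> B)"
proof
  let ?f = "id(y := x)"
  have f_Q: "?f ` Q = Q - {y}"
    using assms(1-3) by auto
  show "(?f \<circ> A) ` (Q - {y}) \<subseteq> Q - {y}" "(?f \<circ> B) ` (Q - {y}) \<subseteq> Q - {y}"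
    using A_closed B_closed f_Q by auto
  show "u = v" if "u \<in> Q - {y}" "v \<in> Q - {y}" "(?f \<circ> A) u \<noteq> u" "(?f \<circ> A) v \<noteq> v" for u v
  proof -
    have "A u \<noteq> u" "A v \<noteq> v"
      using that by auto
    then show ?thesis
      using that A_moves_at_most_one by blast
  qed
  obtain w z where w: "run A B w ` Q = {z}"
    using synchronizable unfolding synchronizable_def is_reset_def by blast
  have "run (?f \<circ> A) (?f \<circ> B) w ` (Q - {y}) = (\<lambda>u. ?f (run A B w u)) ` Q"
    unfolding f_Q[symmetric] image_image using merge_semiconj[OF assms(4,5)] by simp
  also have "\<dots> = {?f z}"
    using w by (metis image_image image_empty image_insert)
  finally show "synchronizable (Q - {y}) (?f \<circ> A) (?f \<circ> B)"
    unfolding synchronizable_def is_reset_def by blast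
qed (use finite_Q in simp)

lemma merge_reset_word:
  assumes "x \<in> Q" "x \<noteq> y" "B x = B y" "(id(y := x)) (A x) = (id(y := x)) (A y)"
    and "is_reset (Q - {y}) (id(y := x) \<circ> A) (id(y := x) \<circ> B) w"
  shows "is_reset Q A B (w @ [False])"
proof -
  obtain z where z: "run (id(y := x) \<circ> A) (id(y := x) \<circ> B) w ` (Q - {y}) = {z}"
    using assms(5) unfolding is_reset_def by blast
  have "B (run A B w u) = B z" if "u \<in> Q" for u
  proof -
    have "(id(y := x)) u \<in> Q - {y}"
      using that assms(1,2) by auto
    then have "(id(y := x)) (run A B w u) = z"
      using z merge_semiconj[OF assms(3,4) that] by blast
    then show ?thesis
      using assms(3) by (auto split: if_splits)
  qed
  then show ?thesis
    by (intro is_resetI[OF Q_nonempty]) simp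
qed

lemma restrict_reduct:
  assumes "m \<in> Q" "m \<notin> B ` Q" "A ` (Q - {m}) \<subseteq> Q - {m}"
  shows "simple_idempotent_automaton (Q - {m}) A B"
proof
  have B_Q: "B ` Q \<subseteq> Q - {m}"
    using B_closed assms(2) by blast
  then have "Q - {m} \<noteq> {}"
    using Q_nonempty by blast
  then show "synchronizable (Q - {m}) A B"
    using synchronizable is_reset_subset unfolding synchronizable_def by blast
  show "B ` (Q - {m}) \<subseteq> Q - {m}"
    using B_Q by blast
  show "u = v" if "u \<in> Q - {m}" "v \<in> Q - {m}" "A u \<noteq> u" "A v \<noteq> v" for u v
    using that A_moves_at_most_one by blast
qed (use finite_Q assms(3) in auto)

lemma restrict_reset_word:
  assumes "m \<notin> B ` Q" "is_reset (Q - {m}) A B w"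
  shows "is_reset Q A B (False # w)"
proof -
  obtain z where "run A B w ` (Q - {m}) = {z}"
    using assms(2) unfolding is_reset_def by blast
  moreover have "B x \<in> Q - {m}" if "x \<in> Q" for x
    using that B_closed assms(1) by blast
  ultimately have "run A B (False # w) x = z" if "x \<in> Q" for x
    using that by auto
  then show ?thesis
    by (intro is_resetI[OF Q_nonempty])
qed

lemma removal_bound:
  assumes "x \<in> Q" "2 \<le> card Q" "length w \<le> (card (Q - {x}) - 1)\<^sup>2"
  shows "length w + 1 \<le> (card Q - 1)\<^sup>2"
proof -
  have "card (Q - {x}) - 1 = card Q - 2"
    using finite_Q assms(1) by simp
  then have "length w \<le> (card Q - 2)\<^sup>2"
    using assms(3) by (simp only:)
  then show ?thesis
    using square_pred_pred_le[OF assms(2)] by linarith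
qed

lemma merge_step:
  assumes merge: "x \<in> Q" "y \<in> Q" "x \<noteq> y" "B x = B y" "(id(y := x)) (A x) = (id(y := x)) (A y)"
    and "\<exists>w. is_reset (Q - {y}) (id(y := x) \<circ> A) (id(y := x) \<circ> B) w \<and> length w \<le> (card (Q - {y}) - 1)\<^sup>2"
  shows "\<exists>w. is_reset Q A B w \<and> length w \<le> (card Q - 1)\<^sup>2"
proof -
  obtain w where w: "is_reset (Q - {y}) (id(y := x) \<circ> A) (id(y := x) \<circ> B) w"
    "length w \<le> (card (Q - {y}) - 1)\<^sup>2"
    using assms(6) by blast
  have "2 \<le> card Q"
    using card_mono[OF finite_Q, of "{x, y}"] merge(1-3) by simp
  then show ?thesis
    using merge_reset_word[OF merge(1,3-5) w(1)] removal_bound[OF merge(2) _ w(2)]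
    by (intro exI[of _ "w @ [False]"]) simp
qed

lemma restrict_step:
  assumes restrict: "m \<in> Q" "m \<notin> B ` Q"
    and "\<exists>w. is_reset (Q - {m}) A B w \<and> length w \<le> (card (Q - {m}) - 1)\<^sup>2"
  shows "\<exists>w. is_reset Q A B w \<and> length w \<le> (card Q - 1)\<^sup>2"
proof -
  obtain w where w: "is_reset (Q - {m}) A B w" "length w \<le> (card (Q - {m}) - 1)\<^sup>2"
    using assms(3) by blast
  have "B m \<in> B ` Q"
    using restrict(1) by (rule imageI)
  then have "B m \<in> Q" "B m \<noteq> m"
    using restrict(2) B_closed by auto
  then have "2 \<le> card Q"
    using card_mono[OF finite_Q, of "{m, B m}"] restrict(1) by simp
  then show ?thesis
    using restrict_reset_word[OF restrict(2) w(1)] removal_bound[OF restrict(1) _ w(2)]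
    by (intro exI[of _ "False # w"]) simp
qed

lemma reset_state_in_Q: "run A B w ` Q = {z} \<Longrightarrow> z \<in> Q"
  using run_in_Q Q_nonempty by (metis all_not_in_conv imageI singletonD)

definition sinks :: "'q set" where
  "sinks = {z\<in>Q. A z = z \<and> B z = z}"

lemma sinks_subset_reset_state: "run A B w ` Q = {z} \<Longrightarrow> sinks \<subseteq> {z}"
  unfolding sinks_def using reset_state_eq_sink[of A B w Q z] by auto

lemma invariant_fixed_by_A:
  assumes C: "C \<subseteq> Q" "\<And>x. x \<in> C \<Longrightarrow> A x = x" "B ` C \<subseteq> C" "inj_on B C" and "x \<in> C"
  shows "B x = x"
proof -
  have "A ` C \<subseteq> C" "inj_on A C"
    using C(2) by (auto simp: inj_on_def)
  then have "card C \<le> 1"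
    using synchronizable_invariant_inj_card_le_1[OF synchronizable finite_Q C(1) _ C(3) _ C(4)] by blast
  moreover have "finite C"
    using C(1) finite_Q by (rule finite_subset)
  ultimately show ?thesis
    using assms(5) C(3) by (auto simp: card_le_Suc0_iff_eq)
qed

lemma invariant_with_moved_point:
  assumes p: "p \<in> Q" "A p \<noteq> p" and cover: "Q \<subseteq> B ` Q \<union> {A p}"
    and R: "R \<subseteq> Q" "p \<in> R" "A ` R \<subseteq> R" "B ` R \<subseteq> R"
  shows "R = Q"
proof (rule ccontr)
  assume "R \<noteq> Q"
  define C where "C = Q - R"
  have "A x = x" if "x \<in> C" for x
    using that R(2) A_fixes[OF p] unfolding C_def by (metis DiffE)
  then have A_C: "A ` C \<subseteq> C"
    by auto
  have "C \<subseteq> B ` C"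
  proof
    fix t assume t: "t \<in> C"
    have "A p \<in> R"
      using R(2,3) by blast
    with t cover obtain x where "x \<in> Q" "t = B x"
      unfolding C_def by blast
    with t R(4) show "t \<in> B ` C"
      unfolding C_def by blast
  qed
  moreover have "finite C"
    unfolding C_def using finite_Q by simp
  ultimately have "C = B ` C"
    by (intro card_seteq) (simp_all add: card_image_le)
  then have B_C: "B ` C \<subseteq> C"
    by simp
  obtain w z where reset: "run A B w ` Q = {z}"
    using synchronizable unfolding synchronizable_def is_reset_def by blast
  have "z \<in> R"
    using reset_state_in_closed_subset[OF reset R(1) _ R(3,4)] R(2) by blast
  moreover have "z \<in> C"
    using reset_state_in_closed_subset[OF reset _ _ A_C B_C] \<open>R \<noteq> Q\<close> R(1) unfolding C_def by blast
  ultimately show False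
    unfolding C_def by blast
qed

lemma reset_state_reaches_all:
  assumes p: "p \<in> Q" "A p \<noteq> p" and inj: "inj_on B (Q - {p})" and cover: "Q \<subseteq> B ` Q \<union> {A p}"
    and reset: "run A B w ` Q = {z}" and not_sink: "z \<notin> sinks"
  shows "Q \<subseteq> range (\<lambda>u. run A B u z)"
proof -
  define R where "R = range (\<lambda>u. run A B u z)"
  have z_R: "z \<in> R"
    unfolding R_def using rangeI[of "\<lambda>u. run A B u z" "[]"] by simp
  have R_Q: "R \<subseteq> Q"
    unfolding R_def using run_in_Q[OF reset_state_in_Q[OF reset]] by blast
  have "A (run A B u z) \<in> R" "B (run A B u z) \<in> R" for u
    unfolding R_def using rangeI[of "\<lambda>u. run A B u z" "u @ [True]"]
      rangeI[of "\<lambda>u. run A B u z" "u @ [False]"] by simp_all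
  then have R_closed: "A ` R \<subseteq> R" "B ` R \<subseteq> R"
    unfolding R_def by auto
  have "p \<in> R"
  proof (rule ccontr)
    assume "p \<notin> R"
    then have A_R: "\<And>x. x \<in> R \<Longrightarrow> A x = x"
      using A_fixes[OF p] R_Q by blast
    moreover have "inj_on B R"
      using inj by (rule inj_on_subset) (use R_Q \<open>p \<notin> R\<close> in blast)
    ultimately have "A z = z \<and> B z = z"
      using invariant_fixed_by_A[OF R_Q _ R_closed(2) _ z_R] z_R by blast
    with not_sink z_R R_Q show False
      unfolding sinks_def by blast
  qed
  then show ?thesis
    using invariant_with_moved_point[OF p cover R_Q _ R_closed] unfolding R_def by blast
qed

lemma exists_word_into:
  assumes p: "p \<in> Q" "A p \<noteq> p" and inj: "inj_on B (Q - {p})" and cover: "Q \<subseteq> B ` Q \<union> {A p}"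
    and S: "S \<subseteq> Q" "S \<noteq> {}" "sinks \<subseteq> S"
  shows "\<exists>w. \<forall>x\<in>Q. run A B w x \<in> S"
proof -
  obtain w z where reset: "run A B w ` Q = {z}"
    using synchronizable unfolding synchronizable_def is_reset_def by blast
  show ?thesis
  proof (cases "z \<in> sinks")
    case True
    then have "z \<in> S"
      using S(3) by blast
    then show ?thesis
      using reset by (intro exI[of _ w]) auto
  next
    case False
    obtain t where "t \<in> S"
      using S(2) by blast
    moreover obtain u where "run A B u z = t"
      using reset_state_reaches_all[OF p inj cover reset False] S(1) \<open>t \<in> S\<close> by auto
    ultimately show ?thesis
      using reset by (intro exI[of _ "w @ u"]) auto
  qed
qed

lemma extension_from_sinks:
  assumes "finite X" "sinks \<subseteq> X" "S\<^sub>0 \<noteq> {}" "S\<^sub>0 \<subseteq> X" "sinks \<subseteq> S\<^sub>0"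
    and step: "\<And>S. S \<noteq> {} \<Longrightarrow> S \<subseteq> X \<Longrightarrow> sinks \<subseteq> S \<Longrightarrow> S \<noteq> X \<Longrightarrow>
      \<exists>u. length u \<le> c \<and> card S < card {x\<in>X. run A B u x \<in> S}"
  shows "\<exists>w. (\<forall>x\<in>X. run A B w x \<in> S\<^sub>0) \<and> length w \<le> c * (card X - card S\<^sub>0)"
proof (rule extension_chain[OF \<open>finite X\<close>, of "\<lambda>S. S \<noteq> {} \<and> sinks \<subseteq> S"])
  fix S assume S: "S \<noteq> {} \<and> sinks \<subseteq> S" "S \<subseteq> X" "S \<noteq> X"
  then obtain u where u: "length u \<le> c" "card S < card {x\<in>X. run A B u x \<in> S}"
    using step by blast
  then have "{x\<in>X. run A B u x \<in> S} \<noteq> {}"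
    by (metis card.empty not_less_zero)
  moreover have "sinks \<subseteq> {x\<in>X. run A B u x \<in> S}"
    using S(1) assms(2) run_fixpoint[of A _ B u] unfolding sinks_def by auto
  ultimately show "\<exists>u. length u \<le> c \<and> card S < card {x\<in>X. run A B u x \<in> S}
    \<and> {x\<in>X. run A B u x \<in> S} \<noteq> {} \<and> sinks \<subseteq> {x\<in>X. run A B u x \<in> S}"
    using u by blast
qed (use assms in auto)

lemma orbit_reaches_moved_point_or_fixed:
  assumes bij: "bij_betw s X X" and X_Q: "X \<subseteq> Q" and y: "y \<in> X" and p: "p \<in> Q" "A p \<noteq> p"
    and B_s: "\<And>x. x \<in> X \<Longrightarrow> x \<noteq> p \<Longrightarrow> B x = s x"
  shows "(\<exists>i. (s ^^ i) y = p) \<or> s y = y"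
proof (cases "\<exists>i. (s ^^ i) y = p")
  case False
  define Orb where "Orb = range (\<lambda>i. (s ^^ i) y)"
  have "(s ^^ i) y \<in> X" for i
    using bij_betwE[OF bij_betw_funpow[OF bij]] y by blast
  then have Orb_X: "Orb \<subseteq> X"
    unfolding Orb_def by blast
  have p_Orb: "p \<notin> Orb"
    using False unfolding Orb_def by blast
  have A_Orb: "A x = x" if "x \<in> Orb" for x
    by (rule A_fixes[OF p]) (use that Orb_X X_Q p_Orb in blast)+
  have B_Orb: "B x = s x" if "x \<in> Orb" for x
    by (rule B_s) (use that Orb_X p_Orb in blast)+
  have "s ((s ^^ i) y) \<in> Orb" for i
    using rangeI[of "\<lambda>i. (s ^^ i) y" "Suc i"] by (simp add: Orb_def)
  then have "B ` Orb \<subseteq> Orb"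
    using B_Orb unfolding Orb_def by auto
  moreover have "inj_on B Orb"
  proof (rule inj_onI)
    fix a b assume "a \<in> Orb" "b \<in> Orb" "B a = B b"
    then show "a = b"
      using B_Orb inj_onD[OF bij_betw_imp_inj_on[OF bij]] Orb_X by (metis subsetD)
  qed
  moreover have "y \<in> Orb"
    using rangeI[of "\<lambda>i. (s ^^ i) y" 0] by (simp add: Orb_def)
  ultimately have "B y = y"
    using invariant_fixed_by_A[of Orb] Orb_X X_Q A_Orb by blast
  then show ?thesis
    using B_Orb \<open>y \<in> Orb\<close> by simp
qed simp

lemma run_eq_blocks:
  "\<exists>bl tf. \<forall>x\<in>Q. run A B w x = (if tf then A (run A B (blocks bl) x) else run A B (blocks bl) x)"
proof (induction w rule: rev_induct)
  case Nil
  show ?case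
    by (intro exI[of _ "[]"] exI[of _ False]) simp
next
  case (snoc c w)
  then obtain bl tf where
    IH: "\<forall>x\<in>Q. run A B w x = (if tf then A (run A B (blocks bl) x) else run A B (blocks bl) x)"
    by blast
  show ?case
  proof (cases c)
    case True
    have "run A B (w @ [c]) x = A (run A B (blocks bl) x)" if "x \<in> Q" for x
      using IH that True A_idempotent[OF run_in_Q[OF that]] by auto
    then show ?thesis
      by (intro exI[of _ bl] exI[of _ True]) simp
  next
    case False
    have "run A B (w @ [c]) x = run A B (blocks (bl @ [tf])) x" if "x \<in> Q" for x
      using IH that False by auto
    then show ?thesis
      by (intro exI[of _ "bl @ [tf]"] exI[of _ False]) simp
  qed
qed

lemma B_image_remove:
  assumes "p \<in> Q" "y \<in> Q" "y \<noteq> p" "B y = B p"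
  shows "B ` Q = B ` (Q - {p})"
proof -
  have "B p \<in> B ` (Q - {p})"
    using assms(2-4) by (metis DiffI imageI singletonD)
  then show ?thesis
    using assms(1) by (metis image_insert insert_Diff insert_absorb)
qed

lemma moved_point_notin_B_image:
  assumes p: "p \<in> Q" "A p \<noteq> p" and y: "y \<in> Q" "y \<noteq> p" "B y = B p"
    and inj: "inj_on B (Q - {p})"
    and no_restrict: "\<And>m. m \<in> Q \<Longrightarrow> m \<notin> B ` Q \<Longrightarrow> \<not> A ` (Q - {m}) \<subseteq> Q - {m}"
  shows "A p \<notin> B ` Q"
proof -
  have "B ` Q = B ` (Q - {p})"
    using B_image_remove p(1) y by blast
  moreover have "0 < card Q"
    using finite_Q p(1) card_gt_0_iff by blast
  ultimately have "card (B ` Q) < card Q"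
    using card_image[OF inj] finite_Q p(1) by simp
  then obtain m where m: "m \<in> Q" "m \<notin> B ` Q"
    using card_mono[OF finite_imageI[OF finite_Q], of Q] by (metis not_le subsetI)
  then obtain z where z: "z \<in> Q" "z \<noteq> m" "A z = m"
    using no_restrict A_closed by blast
  then have "z = p"
    using A_fixes[OF p z(1)] by (cases "z = p") auto
  with z m show ?thesis
    by simp
qed

end

locale permutation_case = simple_idempotent_automaton +
  fixes p :: 'a
  assumes p_in_Q: "p \<in> Q" and p_moved: "A p \<noteq> p" and inj_B: "inj_on B Q"
begin

lemma Ap_in_Q: "A p \<in> Q"
  using A_closed p_in_Q by blast

lemma B_image: "B ` Q = Q"
  using endo_inj_surj[OF finite_Q B_closed inj_B] .

lemma bij_B: "bij_betw B Q Q"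
  using inj_B B_image by (simp add: bij_betw_def)

lemma A_eq_redirect: "x \<in> Q \<Longrightarrow> A x = (id(p := A p)) x"
  using A_fixes[OF p_in_Q p_moved] by auto

sublocale orbit_pair Q B p "A p"
proof
  show "(\<exists>i. (B ^^ i) (A p) = p) \<or> B (A p) = A p"
    using orbit_reaches_moved_point_or_fixed[OF bij_B order_refl Ap_in_Q p_in_Q p_moved] by simp
qed (use finite_Q bij_B p_in_Q p_moved Ap_in_Q in auto)

lemma extension_step:
  assumes S: "S \<noteq> {}" "S \<subseteq> Q" "sinks \<subseteq> S" "S \<noteq> Q"
  shows "\<exists>u. length u \<le> card Q \<and> card S < card {x\<in>Q. run A B u x \<in> S}"
proof -
  have "inj_on B (Q - {p})"
    using inj_B by (rule inj_on_subset) blast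
  moreover have "Q \<subseteq> B ` Q \<union> {A p}"
    using B_image by blast
  ultimately obtain w where "\<forall>x\<in>Q. run A B w x \<in> S"
    using exists_word_into[OF p_in_Q p_moved _ _ S(2,1,3)] by blast
  moreover have "contracting (run A B w)"
    using contracting_run contracting_cong[OF contracting_redirect A_eq_redirect] contracting_s by blast
  ultimately obtain j where "(B ^^ j) (A p) \<in> S" "(B ^^ j) p \<notin> S"
    using separating_iterate S(2,4) by blast
  then obtain k where k: "k < card Q" "card {x\<in>Q. (B ^^ k) ((id(p := A p)) x) \<in> S} = card S + 1"
    using short_funpow_redirect_word S(2) by blast
  have "run A B (True # replicate k False) x = (B ^^ k) ((id(p := A p)) x)" if "x \<in> Q" for x
    using A_eq_redirect[OF that] by (simp add: run_replicate_False)
  then have "{x\<in>Q. run A B (True # replicate k False) x \<in> S} = {x\<in>Q. (B ^^ k) ((id(p := A p)) x) \<in> S}"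
    by auto
  then show ?thesis
    using k by (intro exI[of _ "True # replicate k False"]) simp
qed

lemma sinks_subset: "sinks \<subseteq> {p, A p}"
proof
  fix z assume z: "z \<in> sinks"
  show "z \<in> {p, A p}"
  proof (rule ccontr)
    assume z_pq: "z \<notin> {p, A p}"
    obtain w z' where reset: "run A B w ` Q = {z'}"
      using synchronizable unfolding synchronizable_def is_reset_def by blast
    have "A x \<in> Q - {z}" if "x \<in> Q - {z}" for x
      using that A_closed A_eq_redirect z_pq by auto
    moreover have "B x \<in> Q - {z}" if "x \<in> Q - {z}" for x
    proof -
      have "B x \<noteq> B z"
        using that z inj_onD[OF inj_B, of x z] unfolding sinks_def by blast
      then show ?thesis
        using that z B_closed unfolding sinks_def by auto
    qed
    ultimately have "z' \<in> Q - {z}"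
      using reset_state_in_closed_subset[OF reset, of "Q - {z}"] p_in_Q z_pq by blast
    moreover have "z = z'"
      using sinks_subset_reset_state[OF reset] z by blast
    ultimately show False
      by blast
  qed
qed

theorem short_reset_word: "\<exists>w. is_reset Q A B w \<and> length w \<le> (card Q - 1)\<^sup>2"
proof -
  have "\<exists>W. (\<forall>x\<in>Q. run A B W x \<in> {p, A p}) \<and> length W \<le> card Q * (card Q - card {p, A p})"
    by (rule extension_from_sinks[OF finite_Q _ _ _ _ extension_step])
      (use p_in_Q Ap_in_Q sinks_subset in \<open>auto simp: sinks_def\<close>)
  moreover have "card {p, A p} = 2"
    using p_moved by simp
  ultimately obtain W where W: "\<forall>x\<in>Q. run A B W x \<in> {p, A p}" "length W \<le> card Q * (card Q - 2)"
    by metis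
  have "run A B (W @ [True]) x = A p" if "x \<in> Q" for x
    using W(1) that A_eq_redirect Ap_in_Q by auto
  then have reset_W: "is_reset Q A B (W @ [True])"
    by (intro is_resetI[OF Q_nonempty])
  have "2 \<le> card Q"
    using card_mono[OF finite_Q, of "{p, A p}"] p_in_Q Ap_in_Q \<open>card {p, A p} = 2\<close> by simp
  then have "length (W @ [True]) \<le> (card Q - 1)\<^sup>2"
    using W(2) square_pred_eq[of "card Q"] by simp
  with reset_W show ?thesis
    by blast
qed

end

locale collapsing_case = simple_idempotent_automaton +
  fixes p y :: 'a
  assumes p_in_Q: "p \<in> Q" and p_moved: "A p \<noteq> p"
    and y_in_Q: "y \<in> Q" and y_ne_p: "y \<noteq> p" and y_ne_Ap: "y \<noteq> A p" and B_y: "B y = B p"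
    and inj_B: "inj_on B (Q - {p})" and Ap_notin_B_image: "A p \<notin> B ` Q"
begin

lemma Ap_in_Q: "A p \<in> Q"
  using A_closed p_in_Q by blast

lemma B_image: "B ` Q = Q - {A p}"
proof -
  have "B ` Q = B ` (Q - {p})"
    using B_image_remove p_in_Q y_in_Q y_ne_p B_y by blast
  then have "card (B ` Q) = card (Q - {A p})"
    using card_image[OF inj_B] p_in_Q Ap_in_Q by simp
  moreover have "B ` Q \<subseteq> Q - {A p}"
    using B_closed Ap_notin_B_image by blast
  ultimately show ?thesis
    using finite_Q by (simp add: card_subset_eq)
qed

lemma A_in_Q_minus_p: "x \<in> Q \<Longrightarrow> A x \<in> Q - {p}"
  using A_fixes[OF p_in_Q p_moved] Ap_in_Q p_moved by (cases "x = p") auto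

lemma bij_BA: "bij_betw (B \<circ> A) (Q - {A p}) (Q - {A p})"
proof -
  have maps: "(B \<circ> A) ` (Q - {A p}) \<subseteq> Q - {A p}"
    using A_closed B_image by auto
  have inj: "inj_on (B \<circ> A) (Q - {A p})"
  proof (rule inj_onI)
    fix u v assume u: "u \<in> Q - {A p}" and v: "v \<in> Q - {A p}" and "(B \<circ> A) u = (B \<circ> A) v"
    then have "A u = A v"
      using inj_onD[OF inj_B] A_in_Q_minus_p by auto
    then show "u = v"
      using u v A_fixes[OF p_in_Q p_moved] by (metis DiffE singletonI)
  qed
  moreover have "(B \<circ> A) ` (Q - {A p}) = Q - {A p}"
    using endo_inj_surj[OF _ maps inj] finite_Q by blast
  ultimately show ?thesis
    by (simp add: bij_betw_def)
qed

lemma B_eq_BA_redirect: "x \<in> Q - {A p} \<Longrightarrow> B x = (B \<circ> A) ((id(p := y)) x)"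
  using A_fixes[OF p_in_Q p_moved] y_in_Q y_ne_p B_y by auto

sublocale orbit_pair "Q - {A p}" "B \<circ> A" p y
proof
  show "(\<exists>i. ((B \<circ> A) ^^ i) y = p) \<or> (B \<circ> A) y = y"
    using orbit_reaches_moved_point_or_fixed[OF bij_BA _ _ p_in_Q p_moved] B_eq_BA_redirect
      y_in_Q y_ne_Ap by auto
qed (use finite_Q bij_BA p_in_Q p_moved y_in_Q y_ne_Ap y_ne_p in auto)

lemma run_blocks:
  "x \<in> Q - {A p} \<Longrightarrow> run A B (blocks bl) x = run (B \<circ> A) (B \<circ> A \<circ> id(p := y)) bl x"
proof (induction bl arbitrary: x)
  case (Cons c bl)
  have "B (A x) \<in> Q - {A p}" "B x \<in> Q - {A p}"
    using Cons.prems A_closed B_image by auto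
  then show ?case
    using Cons B_eq_BA_redirect[OF Cons.prems] by auto
qed simp

lemma block_word_into:
  assumes S: "S \<noteq> {}" "S \<subseteq> Q - {A p}" "sinks \<subseteq> S"
  obtains bl where "\<And>x. x \<in> Q - {A p} \<Longrightarrow> run (B \<circ> A) (B \<circ> A \<circ> id(p := y)) bl x \<in> S"
proof -
  have "Q \<subseteq> B ` Q \<union> {A p}" "S \<subseteq> Q"
    using B_image S(2) by auto
  then obtain w where w: "\<forall>x\<in>Q. run A B w x \<in> S"
    using exists_word_into[OF p_in_Q p_moved inj_B _ _ S(1,3)] by blast
  obtain bl tf where bl: "\<forall>x\<in>Q. run A B w x = (if tf then A (run A B (blocks bl) x) else run A B (blocks bl) x)"
    using run_eq_blocks by blast
  have "run (B \<circ> A) (B \<circ> A \<circ> id(p := y)) bl x \<in> S" if x: "x \<in> Q - {A p}" for x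
  proof -
    let ?r = "run A B (blocks bl) x"
    have r_Q: "?r \<in> Q"
      using x run_in_Q by blast
    have "(if tf then A ?r else ?r) \<in> S"
      using w bl x by (metis DiffD1)
    moreover have "A ?r = ?r" if "A ?r \<in> S"
    proof (rule A_fixes[OF p_in_Q p_moved r_Q])
      show "?r \<noteq> p"
        using that S(2) by blast
    qed
    ultimately have "?r \<in> S"
      by (cases tf) auto
    then show ?thesis
      using run_blocks[OF x] by simp
  qed
  then show ?thesis
    using that by blast
qed

lemma extension_step:
  assumes S: "S \<noteq> {}" "S \<subseteq> Q - {A p}" "sinks \<subseteq> S" "S \<noteq> Q - {A p}"
  shows "\<exists>u. length u \<le> card Q \<and> card S < card {x\<in>Q - {A p}. run A B u x \<in> S}"
proof -
  obtain bl where into: "\<And>x. x \<in> Q - {A p} \<Longrightarrow> run (B \<circ> A) (B \<circ> A \<circ> id(p := y)) bl x \<in> S"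
    using block_word_into[OF S(1-3)] by blast
  have "contracting (run (B \<circ> A) (B \<circ> A \<circ> id(p := y)) bl)"
    using contracting_run[OF contracting_s contracting_comp[OF contracting_redirect contracting_s]] .
  then obtain j where "((B \<circ> A) ^^ j) y \<in> S" "((B \<circ> A) ^^ j) p \<notin> S"
    using separating_iterate[of "run (B \<circ> A) (B \<circ> A \<circ> id(p := y)) bl" S] S(2,4) into by blast
  then obtain bl' where bl': "card {x\<in>Q - {A p}. run (B \<circ> A) (B \<circ> A \<circ> id(p := y)) bl' x \<in> S} = card S + 1"
    "length bl' + length (filter id bl') \<le> card (Q - {A p}) + 1"
    using short_block_word[OF S(2)] by blast
  have "{x\<in>Q - {A p}. run A B (blocks bl') x \<in> S} = {x\<in>Q - {A p}. run (B \<circ> A) (B \<circ> A \<circ> id(p := y)) bl' x \<in> S}"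
    using run_blocks by auto
  moreover have "card (Q - {A p}) + 1 = card Q"
    using card_Suc_Diff1[OF finite_Q Ap_in_Q] by simp
  ultimately show ?thesis
    using bl' by (intro exI[of _ "blocks bl'"]) (simp add: length_blocks)
qed

lemma target_state:
  obtains z where "z \<in> Q - {A p}" "sinks \<subseteq> {z}"
proof -
  obtain w z where reset: "run A B w ` Q = {z}"
    using synchronizable unfolding synchronizable_def is_reset_def by blast
  show ?thesis
  proof (cases "z \<in> sinks")
    case True
    then have "z \<in> Q - {A p}"
      using B_image unfolding sinks_def by (metis (mono_tags) imageI mem_Collect_eq)
    then show ?thesis
      using that sinks_subset_reset_state[OF reset] by blast
  next
    case False
    then have "sinks = {}"
      using sinks_subset_reset_state[OF reset] by blast
    then show ?thesis
      using that p_in_Q p_moved by (metis DiffI empty_subsetI singletonD)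
  qed
qed

theorem short_reset_word: "\<exists>w. is_reset Q A B w \<and> length w \<le> (card Q - 1)\<^sup>2"
proof -
  obtain z\<^sub>0 where z\<^sub>0: "z\<^sub>0 \<in> Q - {A p}" "sinks \<subseteq> {z\<^sub>0}"
    by (rule target_state)
  have "\<exists>W. (\<forall>x\<in>Q - {A p}. run A B W x \<in> {z\<^sub>0}) \<and> length W \<le> card Q * (card (Q - {A p}) - card {z\<^sub>0})"
    by (rule extension_from_sinks[OF _ _ _ _ _ extension_step]) (use finite_Q z\<^sub>0 in auto)
  then obtain W where W: "\<forall>x\<in>Q - {A p}. run A B W x \<in> {z\<^sub>0}"
    "length W \<le> card Q * (card (Q - {A p}) - card {z\<^sub>0})"
    by blast
  have "run A B (False # W) x = z\<^sub>0" if "x \<in> Q" for x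
  proof -
    have "B x \<in> Q - {A p}"
      using B_image that by blast
    then show ?thesis
      using W(1) by simp
  qed
  then have reset_W: "is_reset Q A B (False # W)"
    by (intro is_resetI[OF Q_nonempty])
  have "2 \<le> card Q"
    using card_mono[OF finite_Q, of "{p, A p}"] p_in_Q Ap_in_Q p_moved by simp
  moreover have "card (Q - {A p}) - card {z\<^sub>0} = card Q - 2"
    using finite_Q Ap_in_Q by simp
  ultimately have "length (False # W) \<le> (card Q - 1)\<^sup>2"
    using W(2) square_pred_eq[of "card Q"] by simp
  with reset_W show ?thesis
    by blast
qed

end

context simple_idempotent_automaton
begin

lemma irreducible_cases:
  assumes no_merge: "\<And>x y. x \<in> Q \<Longrightarrow> y \<in> Q \<Longrightarrow> x \<noteq> y \<Longrightarrow> B x = B y \<Longrightarrow>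
      (id(y := x)) (A x) \<noteq> (id(y := x)) (A y)"
    and no_restrict: "\<And>m. m \<in> Q \<Longrightarrow> m \<notin> B ` Q \<Longrightarrow> \<not> A ` (Q - {m}) \<subseteq> Q - {m}"
  obtains (trivial) "card Q = 1"
  | (permutation) p where "p \<in> Q" "A p \<noteq> p" "inj_on B Q"
  | (collapsing) p y where "collapsing_case Q A B p y"
proof (cases "inj_on B Q")
  case True
  show ?thesis
  proof (cases "\<exists>p\<in>Q. A p \<noteq> p")
    case False
    then have "card Q \<le> 1"
      using synchronizable_invariant_inj_card_le_1[OF synchronizable finite_Q order_refl A_closed B_closed _ True]
      by (simp add: inj_on_def)
    then show ?thesis
      using trivial finite_Q Q_nonempty by (simp add: le_Suc_eq card_gt_0_iff)
  qed (use permutation True in blast)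
next
  case False
  have one_moved: "A x \<noteq> x \<or> A y \<noteq> y" if "x \<in> Q" "y \<in> Q" "x \<noteq> y" "B x = B y" for x y
    using no_merge[OF that] that(3) by auto
  obtain u v where uv: "u \<in> Q" "v \<in> Q" "u \<noteq> v" "B u = B v"
    using False unfolding inj_on_def by blast
  moreover have "B v = B u"
    using uv by simp
  ultimately obtain p y where p: "p \<in> Q" "A p \<noteq> p" and y: "y \<in> Q" "y \<noteq> p" "B y = B p"
    using one_moved[OF uv] by blast
  have inj: "inj_on B (Q - {p})"
  proof (rule inj_onI)
    fix a b assume "a \<in> Q - {p}" "b \<in> Q - {p}" "B a = B b"
    then show "a = b"
      using one_moved[of a b] A_fixes[OF p] by blast
  qed
  have "y \<noteq> A p"
    using no_merge[of p y] p y A_fixes[OF p y(1,2)] by auto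
  moreover have "A p \<notin> B ` Q"
    using moved_point_notin_B_image[OF p y inj no_restrict] .
  ultimately have "collapsing_case Q A B p y"
    using p y inj by unfold_locales
  then show ?thesis
    by (rule collapsing)
qed

lemma reduction_cases:
  obtains (trivial) "card Q = 1"
  | (merge) x y where "x \<in> Q" "y \<in> Q" "x \<noteq> y" "B x = B y" "(id(y := x)) (A x) = (id(y := x)) (A y)"
  | (restrict) m where "m \<in> Q" "m \<notin> B ` Q" "A ` (Q - {m}) \<subseteq> Q - {m}"
  | (permutation) p where "p \<in> Q" "A p \<noteq> p" "inj_on B Q"
  | (collapsing) p y where "collapsing_case Q A B p y"
proof -
  consider (merge) x y where "x \<in> Q" "y \<in> Q" "x \<noteq> y" "B x = B y" "(id(y := x)) (A x) = (id(y := x)) (A y)"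
    | (restrict) m where "m \<in> Q" "m \<notin> B ` Q" "A ` (Q - {m}) \<subseteq> Q - {m}"
    | (irreducible) "\<And>x y. x \<in> Q \<Longrightarrow> y \<in> Q \<Longrightarrow> x \<noteq> y \<Longrightarrow> B x = B y \<Longrightarrow>
        (id(y := x)) (A x) \<noteq> (id(y := x)) (A y)"
      "\<And>m. m \<in> Q \<Longrightarrow> m \<notin> B ` Q \<Longrightarrow> \<not> A ` (Q - {m}) \<subseteq> Q - {m}"
    by blast
  then show ?thesis
  proof cases
    case irreducible
    then show ?thesis
      by (rule irreducible_cases) (use that in blast)+
  qed (use that in blast)+
qed

end

theorem reset_word_bound:
  "simple_idempotent_automaton Q A B \<Longrightarrow> \<exists>w. is_reset Q A B w \<and> length w \<le> (card Q - 1)\<^sup>2"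
proof (induction "card Q" arbitrary: Q A B rule: less_induct)
  case less
  interpret simple_idempotent_automaton Q A B
    by (fact less.prems)
  show ?case
  proof (cases rule: reduction_cases)
    case trivial
    then obtain z where "Q = {z}"
      by (rule card_1_singletonE)
    then show ?thesis
      by (intro exI[of _ "[]"]) (simp add: is_reset_def)
  next
    case (merge x y)
    have "card (Q - {y}) < card Q"
      using finite_Q merge(2) by (rule card_Diff1_less)
    then show ?thesis
      using merge_step[OF merge less.hyps[OF _ merge_reduct[OF merge]]] by blast
  next
    case (restrict m)
    have "card (Q - {m}) < card Q"
      using finite_Q restrict(1) by (rule card_Diff1_less)
    then show ?thesis
      using restrict_step[OF restrict(1,2) less.hyps[OF _ restrict_reduct[OF restrict]]] by blast
  next
    case (permutation p)
    then show ?thesis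
      by (intro permutation_case.short_reset_word) unfold_locales
  next
    case (collapsing p y)
    then show ?thesis
      by (rule collapsing_case.short_reset_word)
  qed
qed

section \<open>Complete DFAs over two letters\<close>

lemma delta_word_eq_run:
  assumes "a \<noteq> b" "set w \<subseteq> {a, b}"
  shows "delta_word delta x w = run (\<lambda>x. delta x a) (\<lambda>x. delta x b) (map (\<lambda>c. c = a) w) x"
  using assms by (induction w arbitrary: x) (auto simp: delta_word_def)

lemma delta_word_map_eq_run:
  "delta_word delta x (map (\<lambda>c. if c then a else b) w) = run (\<lambda>x. delta x a) (\<lambda>x. delta x b) w x"
  by (induction w arbitrary: x) (auto simp: delta_word_def)

lemma simple_idempotent_moves_at_most_one:
  assumes "simple_idempotent Q delta a" "x \<in> Q" "z \<in> Q" "delta x a \<noteq> x" "delta z a \<noteq> z"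
  shows "x = z"
proof -
  have idem: "delta (delta v a) a = delta v a" if "v \<in> Q" for v
    using assms(1) that unfolding simple_idempotent_def by simp
  have "card (Q - (\<lambda>q. delta q a) ` Q) = 1"
    using assms(1) unfolding simple_idempotent_def by simp
  then obtain r where r: "Q - (\<lambda>q. delta q a) ` Q = {r}"
    by (rule card_1_singletonE)
  have "u \<in> {r}" if "u \<in> Q" "delta u a \<noteq> u" for u
  proof -
    have "u \<notin> (\<lambda>q. delta q a) ` Q"
      using idem that(2) by auto
    then show ?thesis
      using r that(1) by blast
  qed
  then show ?thesis
    using assms(2-5) by blast
qed

lemma simple_idempotent_automaton_of_dfa:
  assumes "is_dfa Q {a, b} delta" "a \<noteq> b" "synchronizing Q {a, b} delta" "simple_idempotent Q delta a"
  shows "simple_idempotent_automaton Q (\<lambda>x. delta x a) (\<lambda>x. delta x b)"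
proof
  show "finite Q" "(\<lambda>x. delta x a) ` Q \<subseteq> Q" "(\<lambda>x. delta x b) ` Q \<subseteq> Q"
    using assms(1) unfolding is_dfa_def by auto
  show "\<And>x z. x \<in> Q \<Longrightarrow> z \<in> Q \<Longrightarrow> delta x a \<noteq> x \<Longrightarrow> delta z a \<noteq> z \<Longrightarrow> x = z"
    using simple_idempotent_moves_at_most_one[OF assms(4)] by blast
  obtain w where "reset_word Q {a, b} delta w"
    using assms(3) unfolding synchronizing_def by blast
  then have w_ab: "set w \<subseteq> {a, b}" and "card ((\<lambda>q. delta_word delta q w) ` Q) = 1"
    unfolding reset_word_def by blast+
  moreover have "(\<lambda>q. delta_word delta q w) ` Q = run (\<lambda>x. delta x a) (\<lambda>x. delta x b) (map (\<lambda>c. c = a) w) ` Q"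
    by (rule image_cong[OF refl delta_word_eq_run[OF assms(2) w_ab]])
  ultimately show "synchronizable Q (\<lambda>x. delta x a) (\<lambda>x. delta x b)"
    unfolding synchronizable_def is_reset_iff_card by auto
qed

lemma reset_word_of_is_reset:
  assumes "is_reset Q (\<lambda>x. delta x a) (\<lambda>x. delta x b) w"
  shows "reset_word Q {a, b} delta (map (\<lambda>c. if c then a else b) w)"
proof -
  have "(\<lambda>q. delta_word delta q (map (\<lambda>c. if c then a else b) w)) ` Q = run (\<lambda>x. delta x a) (\<lambda>x. delta x b) w ` Q"
    by (simp add: delta_word_map_eq_run)
  with assms show ?thesis
    unfolding reset_word_def is_reset_iff_card by auto
qed

lemma reset_threshold_le: "reset_word Q S delta w \<Longrightarrow> reset_threshold Q S delta \<le> length w"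
  unfolding reset_threshold_def by (rule Least_le) blast

theorem mainTheorem1:
  fixes Q :: "'q set" and delta :: "'q \<Rightarrow> 'c \<Rightarrow> 'q" and a b :: 'c and n :: nat
  assumes "is_dfa Q {a, b} delta"
    and "a \<noteq> b"
    and "card Q = n"
    and "synchronizing Q {a, b} delta"
    and "simple_idempotent Q delta a"
  shows "reset_threshold Q {a, b} delta \<le> (n - 1)^2"
proof -
  obtain w where w: "is_reset Q (\<lambda>x. delta x a) (\<lambda>x. delta x b) w" "length w \<le> (card Q - 1)\<^sup>2"
    using reset_word_bound[OF simple_idempotent_automaton_of_dfa[OF assms(1,2,4,5)]] by blast
  have "reset_threshold Q {a, b} delta \<le> length (map (\<lambda>c. if c then a else b) w)"
    by (rule reset_threshold_le[OF reset_word_of_is_reset[OF w(1)]])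
  with w(2) assms(3) show ?thesis
    by simp
qed

end
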